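(* Let $A\in\mathbb{R}^{m\times m}$ with $S_{\max}(A)>0$, $B\in\mathbb{R}^{m\times n}$, $k>0$, and let $P$ be a symmetric positive definite solution of $A^{\mathrm T}P+PA-2PBB^{\mathrm T}P+kI_m=0$. Let $x_g\in\mathbb{R}^m$ with $\|x_g\|\le\overline{x}_g$, and let $d:[0,\infty)\to\mathbb{R}^m$ be continuous with $\|d(t)\|\le\overline{d}$ for all $t\ge0$. Let $0=t_0<t_1<t_2<\cdots$ be servicing instants with $t_s\to\infty$. Consider the system $$\dot x(t)=Ax(t)+Bu(t)+d(t),\qquad u(t)=B^{\mathrm T}P\,(x_g-\hat x(t)),$$ $$\dot{\hat x}(t)=-A(x_g-\hat x(t))+Bu(t)\ \text{ for } t\in[t_s,t_{s+1}),\qquad \hat x(t_s)=x(t_s)\ \text{ for all } s\ge0,$$ with $x$ continuous and $\hat x$ right-continuous, and define $e(t)=x_g-x(t)$. Let $V_T>0$, $\kappa=S_{\max}(A)\overline{x}_g+\overline{d}$, and suppose that for every $s\ge0$, $$t_{s+1}-t_s\le\frac{1}{S_{\max}(A)}\ln\!\left(\frac{V_TS_{\max}(A)}{\kappa}+1\right).$$ Then, with $\rho\triangleq 2\overline{d}S_{\max}(P)+2V_TS_{\max}(PBB^{\mathrm T}P)+2S_{\max}(PA)\overline{x}_g$, for all $t\ge0$, $$\|e(t)\|\le\frac{\lambda_{\max}(P)\rho}{\lambda_{\min}(P)k}\left(1-e^{-\frac{k}{2\lambda_{\max}(P)}t}\right)+\sqrt{\frac{\lambda_{\max}(P)}{\lambda_{\min}(P)}}\,\|e(0)\|\,e^{-\frac{k}{2\lambda_{\max}(P)}t};$$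 moreover $e$, $x_g-\hat x$ and $u$ are bounded on $[0,\infty)$. *)

theory Defs
  imports "HOL-Analysis.Analysis"
begin

definition eigvals :: "real^'m^'m \<Rightarrow> real set" where
  "eigvals M = {c. \<exists>v. v \<noteq> 0 \<and> M *v v = c *s v}"

definition lambda_max :: "real^'m^'m \<Rightarrow> real" where
  "lambda_max M = Max (eigvals M)"

definition lambda_min :: "real^'m^'m \<Rightarrow> real" where
  "lambda_min M = Min (eigvals M)"

definition smax :: "real^'n^'m \<Rightarrow> real" where
  "smax M = sqrt (lambda_max (transpose M ** M))"

definition pos_def :: "real^'m^'m \<Rightarrow> bool" where
  "pos_def P \<longleftrightarrow> transpose P = P \<and> (\<forall>v. v \<noteq> 0 \<longrightarrow> v \<bullet> (P *v v) > 0)"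

end

(*
  Between two servicing instants the sampling error z = xhat - x obeys z' = A z - (A x_g + d)
  and vanishes at the reset, so a Gronwall estimate bounds |z| by
  (kappa / S_max(A)) (exp (S_max(A) (t - t_s)) - 1), which the dwell-time condition keeps below V_T.
  With |z| <= V_T, the Riccati equation turns the derivative of V = e^T P e into at most
  -k |e|^2 + rho |e|. Hence W = sqrt V satisfies W' <= -(k / (2 lambda_max)) W + rho / (2 sqrt lambda_min)
  on every servicing interval; as W is continuous across resets, the comparison estimate chains from
  one interval to the next, and lambda_min |e|^2 <= V <= lambda_max |e|^2 converts it into the bound on |e|.
  Square roots of norms are not differentiable at 0, so sqrt (. + delta^2) is used and delta -> 0.
*)
theory Submission
  imports Defs
begin

section \<open>Rayleigh quotient bounds for symmetric matrices\<close>

lemma matrix_vector_mult_uminus_left [simp]: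
  fixes M :: "real^'n^'m"
  shows "(- M) *v x = - (M *v x)"
  by (simp add: matrix_vector_mult_def vec_eq_iff sum_negf)

lemma symmetric_matrix_inner_commute:
  fixes M :: "real^'m^'m"
  assumes "transpose M = M"
  shows "(M *v v) \<bullet> w = v \<bullet> (M *v w)"
  by (metis assms transpose_matrix_vector dot_lmul_matrix)

lemma self_adjoint_nonneg_kernel:
  fixes f :: "'a::real_inner \<Rightarrow> 'a"
  assumes lin: "linear f" and adj: "\<And>x y. f x \<bullet> y = x \<bullet> f y"
    and nonneg: "\<And>y. 0 \<le> y \<bullet> f y" and zero: "v \<bullet> f v = 0"
  shows "f v = 0"
proof -
  define w where "w = f v"
  define Q where "Q = w \<bullet> f w"
  have Q: "Q \<ge> 0" using nonneg unfolding Q_def .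
  have quad: "2 * r * (w \<bullet> w) \<le> r^2 * Q" for r :: real
  proof -
    have "0 \<le> (v - r *\<^sub>R w) \<bullet> f (v - r *\<^sub>R w)" by (rule nonneg)
    also have "\<dots> = - 2 * r * (w \<bullet> w) + r^2 * Q"
      using adj[of v w] zero
      by (simp add: linear_diff[OF lin] linear_scale[OF lin] w_def Q_def power2_eq_square
          algebra_simps inner_commute)
    finally show ?thesis by simp
  qed
  have "w \<bullet> w \<le> 0"
  proof (rule ccontr)
    assume "\<not> w \<bullet> w \<le> 0"
    hence p: "w \<bullet> w > 0" by linarith
    define r where "r = (w \<bullet> w) / (Q + 1)"
    have r: "r > 0" using p Q by (simp add: r_def)
    have "r * (2 * (w \<bullet> w)) \<le> r * (r * Q)" using quad[of r] by (simp add: power2_eq_square algebra_simps)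
    hence "2 * (w \<bullet> w) \<le> r * Q" using r by simp
    also have "r * Q < w \<bullet> w" using p Q by (simp add: r_def divide_less_eq)
    finally show False using p by simp
  qed
  hence "w \<bullet> w = 0" using inner_ge_zero[of w] by linarith
  thus ?thesis unfolding w_def by simp
qed

lemma quadratic_form_max_on_sphere:
  fixes M :: "real^'m^'m"
  obtains v where "norm v = 1" "\<And>w. w \<bullet> (M *v w) \<le> (v \<bullet> (M *v v)) * (w \<bullet> w)"
proof -
  have "continuous_on (sphere 0 1) (\<lambda>v. v \<bullet> (M *v v))"
    by (intro continuous_intros continuous_on_compose2[OF linear_continuous_on[OF matrix_vector_mul_bounded_linear]]) auto
  moreover have "sphere (0::real^'m) 1 \<noteq> {}" by simp
  ultimately obtain v where v: "v \<in> sphere 0 1"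
    and vmax: "\<And>y. y \<in> sphere 0 1 \<Longrightarrow> y \<bullet> (M *v y) \<le> v \<bullet> (M *v v)"
    using continuous_attains_sup[OF compact_sphere] by blast
  have max: "w \<bullet> (M *v w) \<le> (v \<bullet> (M *v v)) * (w \<bullet> w)" for w
  proof (cases "w = 0")
    case False
    let ?y = "(1 / norm w) *\<^sub>R w"
    have "(w \<bullet> (M *v w)) / (norm w)^2 = ?y \<bullet> (M *v ?y)"
      by (simp add: matrix_vector_mult_scaleR power2_eq_square)
    also have "\<dots> \<le> v \<bullet> (M *v v)" using False by (intro vmax) simp
    finally show ?thesis using False by (simp add: divide_le_eq power2_norm_eq_inner mult.commute)
  qed simp
  show thesis using that v max by simp
qed

lemma symmetric_matrix_max_eigenvector:
  fixes M :: "real^'m^'m"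
  assumes sym: "transpose M = M"
  obtains v where "norm v = 1" "\<And>w. w \<bullet> (M *v w) \<le> (v \<bullet> (M *v v)) * (w \<bullet> w)"
    "M *v v = (v \<bullet> (M *v v)) *\<^sub>R v"
proof -
  obtain v where v: "norm v = 1" and max: "\<And>w. w \<bullet> (M *v w) \<le> (v \<bullet> (M *v v)) * (w \<bullet> w)"
    using quadratic_form_max_on_sphere[of M] by blast
  define c where "c = v \<bullet> (M *v v)"
  have "c *\<^sub>R v - M *v v = 0"
  proof (rule self_adjoint_nonneg_kernel[where f = "\<lambda>y. c *\<^sub>R y - M *v y"])
    show "linear (\<lambda>y. c *\<^sub>R y - M *v y)"
      by (simp add: linear_iff algebra_simps)
    show "(c *\<^sub>R x - M *v x) \<bullet> y = x \<bullet> (c *\<^sub>R y - M *v y)" for x y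
      using symmetric_matrix_inner_commute[OF sym] by (simp add: inner_diff_left inner_diff_right)
    show "0 \<le> y \<bullet> (c *\<^sub>R y - M *v y)" for y
      using max[of y] by (simp add: inner_diff_right c_def)
    show "v \<bullet> (c *\<^sub>R v - M *v v) = 0"
      using v by (simp add: inner_diff_right c_def norm_eq_1)
  qed
  hence "M *v v = c *\<^sub>R v" by simp
  thus thesis using that v max by (simp add: c_def)
qed

lemma eigval_le_quadratic_form_bound:
  fixes M :: "real^'m^'m"
  assumes bound: "\<And>w. w \<bullet> (M *v w) \<le> c * (w \<bullet> w)" and "c' \<in> eigvals M"
  shows "c' \<le> c"
proof -
  obtain u where u: "u \<noteq> 0" "M *v u = c' *\<^sub>R u"
    using assms(2) unfolding eigvals_def by (auto simp: scalar_mult_eq_scaleR)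
  have "c' * (u \<bullet> u) \<le> c * (u \<bullet> u)" using bound[of u] u(2) by simp
  thus ?thesis using u(1) by simp
qed

lemma finite_eigvals_symmetric:
  fixes M :: "real^'m^'m"
  assumes sym: "transpose M = M" shows "finite (eigvals M)"
proof -
  define f where "f c = (SOME v. v \<noteq> 0 \<and> M *v v = c *\<^sub>R v)" for c
  have fc: "f c \<noteq> 0 \<and> M *v f c = c *\<^sub>R f c" if "c \<in> eigvals M" for c
  proof -
    from that obtain v where "v \<noteq> 0 \<and> M *v v = c *\<^sub>R v"
      unfolding eigvals_def by (auto simp: scalar_mult_eq_scaleR)
    then show ?thesis unfolding f_def by (rule someI)
  qed
  have orth: "f c1 \<bullet> f c2 = 0" if "c1 \<in> eigvals M" "c2 \<in> eigvals M" "c1 \<noteq> c2" for c1 c2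
  proof -
    have "c1 * (f c1 \<bullet> f c2) = (M *v f c1) \<bullet> f c2" using fc[OF that(1)] by simp
    also have "\<dots> = f c1 \<bullet> (M *v f c2)" by (rule symmetric_matrix_inner_commute[OF sym])
    also have "\<dots> = c2 * (f c1 \<bullet> f c2)" using fc[OF that(2)] by simp
    finally show ?thesis using that(3) by simp
  qed
  have inj: "inj_on f (eigvals M)"
    by (rule inj_onI) (metis orth fc inner_eq_zero_iff)
  have "independent (f ` eigvals M)"
    by (rule pairwise_orthogonal_independent) (use orth fc in \<open>auto simp: pairwise_def orthogonal_def\<close>)
  hence "finite (f ` eigvals M)" using independent_bound by blast
  thus ?thesis using finite_imageD inj by blast
qed

lemma symmetric_lambda_max:
  fixes M :: "real^'m^'m"
  assumes sym: "transpose M = M"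
  shows quadratic_form_le_lambda_max: "w \<bullet> (M *v w) \<le> lambda_max M * (w \<bullet> w)"
    and lambda_max_attained: "\<exists>v. norm v = 1 \<and> v \<bullet> (M *v v) = lambda_max M"
proof -
  obtain v where v: "norm v = 1" and max: "\<And>w. w \<bullet> (M *v w) \<le> (v \<bullet> (M *v v)) * (w \<bullet> w)"
    and eig: "M *v v = (v \<bullet> (M *v v)) *\<^sub>R v"
    using symmetric_matrix_max_eigenvector[OF sym] by blast
  have "v \<bullet> (M *v v) \<in> eigvals M"
    using v eig unfolding eigvals_def by (auto simp: scalar_mult_eq_scaleR intro!: exI[of _ v])
  hence "lambda_max M = v \<bullet> (M *v v)"
    unfolding lambda_max_def
    by (intro Max_eqI finite_eigvals_symmetric sym eigval_le_quadratic_form_bound[OF max])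
  thus "w \<bullet> (M *v w) \<le> lambda_max M * (w \<bullet> w)" "\<exists>v. norm v = 1 \<and> v \<bullet> (M *v v) = lambda_max M"
    using v max by auto
qed

lemma eigvals_uminus: "c \<in> eigvals (- M) \<longleftrightarrow> - c \<in> eigvals M"
  unfolding eigvals_def scalar_mult_eq_scaleR by (auto simp: minus_equation_iff) (metis minus_minus)

lemma symmetric_lambda_min:
  fixes M :: "real^'m^'m"
  assumes sym: "transpose M = M"
  shows lambda_min_le_quadratic_form: "lambda_min M * (w \<bullet> w) \<le> w \<bullet> (M *v w)"
    and lambda_min_attained: "\<exists>v. norm v = 1 \<and> v \<bullet> (M *v v) = lambda_min M"
proof -
  have "transpose (- M) = - M" using sym by (simp add: transpose_def vec_eq_iff)
  then obtain v where v: "norm v = 1"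
    and max: "\<And>w. w \<bullet> ((- M) *v w) \<le> (v \<bullet> ((- M) *v v)) * (w \<bullet> w)"
    and eig: "(- M) *v v = (v \<bullet> ((- M) *v v)) *\<^sub>R v"
    using symmetric_matrix_max_eigenvector by blast
  define c where "c = v \<bullet> (M *v v)"
  have bound: "c * (w \<bullet> w) \<le> w \<bullet> (M *v w)" for w using max[of w] by (simp add: c_def)
  have "c \<in> eigvals M"
    using v eig unfolding eigvals_def by (auto simp: c_def scalar_mult_eq_scaleR intro!: exI[of _ v])
  moreover have "c \<le> c'" if "c' \<in> eigvals M" for c'
    using eigval_le_quadratic_form_bound[OF max, of "- c'"] that by (simp add: eigvals_uminus c_def)
  ultimately have min: "lambda_min M = c"
    unfolding lambda_min_def by (intro Min_eqI finite_eigvals_symmetric sym) auto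
  show "lambda_min M * (w \<bullet> w) \<le> w \<bullet> (M *v w)" using bound min by simp
  show "\<exists>v. norm v = 1 \<and> v \<bullet> (M *v v) = lambda_min M" using v min c_def by auto
qed

lemma lambda_min_le_lambda_max:
  fixes M :: "real^'m^'m"
  assumes "transpose M = M"
  shows "lambda_min M \<le> lambda_max M"
proof -
  obtain v where "norm v = 1" "v \<bullet> (M *v v) = lambda_min M" using lambda_min_attained[OF assms] by blast
  thus ?thesis using quadratic_form_le_lambda_max[OF assms, of v] by (simp add: norm_eq_1)
qed

lemma smax_bounds:
  fixes M :: "real^'n^'m"
  shows norm_matrix_vector_le_smax: "norm (M *v v) \<le> smax M * norm v"
    and smax_nonneg: "0 \<le> smax M"
proof -
  define S where "S = transpose M ** M"
  have sym: "transpose S = S" unfolding S_def by (simp add: matrix_transpose_mul)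
  have quad: "w \<bullet> (S *v w) = (M *v w) \<bullet> (M *v w)" for w
    unfolding S_def by (metis matrix_vector_mul_assoc transpose_matrix_vector dot_lmul_matrix inner_commute)
  have S0: "lambda_max S \<ge> 0"
    using lambda_max_attained[OF sym] quad by (metis inner_ge_zero)
  have "(norm (M *v v))^2 \<le> lambda_max S * (norm v)^2"
    using quadratic_form_le_lambda_max[OF sym, of v] quad[of v] by (simp add: power2_norm_eq_inner)
  hence "sqrt ((norm (M *v v))^2) \<le> sqrt (lambda_max S * (norm v)^2)" by (rule real_sqrt_le_mono)
  thus "norm (M *v v) \<le> smax M * norm v"
    unfolding smax_def S_def[symmetric] using S0 by (simp add: real_sqrt_mult)
  show "0 \<le> smax M" unfolding smax_def S_def[symmetric] using S0 by simp
qed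

lemma abs_inner_matrix_vector_le:
  fixes M :: "real^'n^'m"
  assumes "norm v \<le> r"
  shows "\<bar>w \<bullet> (M *v v)\<bar> \<le> norm w * (smax M * r)"
proof -
  have "\<bar>w \<bullet> (M *v v)\<bar> \<le> norm w * norm (M *v v)" by (rule Cauchy_Schwarz_ineq2)
  also have "norm (M *v v) \<le> smax M * r"
    using norm_matrix_vector_le_smax[of M v] smax_nonneg[of M] assms by (meson mult_left_mono order_trans)
  hence "norm w * norm (M *v v) \<le> norm w * (smax M * r)" by (rule mult_left_mono) simp
  finally show ?thesis .
qed

section \<open>Linear differential inequalities\<close>

lemma has_real_derivative_inner:
  assumes "(f has_vector_derivative f') (at x within s)" "(g has_vector_derivative g') (at x within s)"
  shows "((\<lambda>x. f x \<bullet> g x) has_real_derivative (f x \<bullet> g' + f' \<bullet> g x)) (at x within s)"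
  using has_derivative_inner[OF assms[unfolded has_vector_derivative_def]]
  unfolding has_field_derivative_def
  by (rule has_derivative_eq_rhs) (auto simp: algebra_simps fun_eq_iff)

lemma has_real_derivative_sqrt_shift:
  assumes "(q has_real_derivative q') (at y)" "q y + e > 0"
  shows "((\<lambda>y. sqrt (q y + e)) has_real_derivative q' / (2 * sqrt (q y + e))) (at y)"
proof -
  have "((\<lambda>y. q y + e) has_real_derivative q') (at y)"
    using assms(1) by (intro derivative_eq_intros) auto
  from DERIV_chain2[OF DERIV_real_sqrt[OF assms(2)] this]
  show ?thesis by (simp add: field_simps)
qed

lemma has_vector_derivative_at_within_Ico:
  assumes "(f has_vector_derivative f') (at y within {a..<b})" "a < y" "y < b"
  shows "(f has_vector_derivative f') (at y)"
proof -
  have "at y within {a..<b} = at y"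
    by (rule at_within_open_subset[of y "{a<..<b}"]) (use assms in auto)
  thus ?thesis using assms(1) by simp
qed

lemma linear_differential_inequality:
  fixes f f' :: "real \<Rightarrow> real"
  assumes "a \<le> b" and cont: "continuous_on {a..b} f"
    and der: "\<And>y. a < y \<Longrightarrow> y < b \<Longrightarrow> (f has_real_derivative f' y) (at y)"
    and bound: "\<And>y. a < y \<Longrightarrow> y < b \<Longrightarrow> f' y \<le> c * f y + \<beta>" and "c \<noteq> 0"
  shows "(f b + \<beta> / c) * exp (- c * b) \<le> (f a + \<beta> / c) * exp (- c * a)"
proof (rule DERIV_nonpos_imp_decreasing_open[OF \<open>a \<le> b\<close>])
  fix y assume y: "a < y" "y < b"
  have "((\<lambda>y. (f y + \<beta> / c) * exp (- c * y)) has_real_derivative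
      exp (- c * y) * (f' y - c * f y - \<beta>)) (at y)"
    using der[OF y] \<open>c \<noteq> 0\<close> by (auto intro!: derivative_eq_intros simp: field_simps)
  moreover have "exp (- c * y) * (f' y - c * f y - \<beta>) \<le> 0"
    using bound[OF y] by (simp add: mult_nonneg_nonpos)
  ultimately show "\<exists>D. ((\<lambda>y. (f y + \<beta> / c) * exp (- c * y)) has_real_derivative D) (at y) \<and> D \<le> 0"
    by blast
qed (intro continuous_intros cont)

context
  fixes z z' :: "real \<Rightarrow> 'a::real_inner" and a b c \<kappa> :: real
  assumes der: "\<And>y. y \<in> {a..<b} \<Longrightarrow> (z has_vector_derivative z' y) (at y within {a..<b})"
    and growth: "\<And>y. y \<in> {a..<b} \<Longrightarrow> norm (z' y) \<le> c * norm (z y) + \<kappa>"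
    and z0: "z a = 0" and c: "c > 0"
begin

lemma norm_growth_bound_smoothed:
  assumes \<tau>: "\<tau> \<in> {a..<b}" and \<epsilon>: "\<epsilon> > 0"
  shows "norm (z \<tau>) \<le> (\<epsilon> + \<kappa> / c) * exp (c * (\<tau> - a)) - \<kappa> / c"
proof -
  have \<kappa>: "\<kappa> \<ge> 0" using growth[of a] z0 \<tau> by (auto intro: order_trans[OF norm_ge_zero])
  have "continuous_on {a..<b} z"
    using der has_vector_derivative_continuous continuous_on_eq_continuous_within by blast
  hence zc: "continuous_on {a..\<tau>} z" by (rule continuous_on_subset) (use \<tau> in auto)
  define h where "h y = sqrt (z y \<bullet> z y + \<epsilon>^2)" for y
  have hpos: "h y > 0" for y unfolding h_def using \<epsilon> by (simp add: add_nonneg_pos)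
  have hz: "norm (z y) \<le> h y" for y
    unfolding h_def by (rule real_le_rsqrt) (simp add: power2_norm_eq_inner)
  define h' where "h' y = (z y \<bullet> z' y + z' y \<bullet> z y) / (2 * h y)" for y
  have "(h \<tau> + \<kappa> / c) * exp (- c * \<tau>) \<le> (h a + \<kappa> / c) * exp (- c * a)"
  proof (rule linear_differential_inequality[where f' = h'])
    show "continuous_on {a..\<tau>} h" unfolding h_def by (intro continuous_intros zc)
  next
    fix y assume y: "a < y" "y < \<tau>"
    hence yi: "y \<in> {a..<b}" using \<tau> by auto
    have "(z has_vector_derivative z' y) (at y)"
      using has_vector_derivative_at_within_Ico[OF der[OF yi]] y \<tau> by auto
    from has_real_derivative_sqrt_shift[OF has_real_derivative_inner[OF this this], of "\<epsilon>^2"]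
    show "(h has_real_derivative h' y) (at y)"
      unfolding h_def h'_def using \<epsilon> by (simp add: add_nonneg_pos h_def[symmetric])
    have "z y \<bullet> z' y \<le> norm (z y) * norm (z' y)" by (rule norm_cauchy_schwarz)
    also have "\<dots> \<le> norm (z y) * (c * norm (z y) + \<kappa>)"
      using growth[OF yi] by (rule mult_left_mono) simp
    also have "\<dots> \<le> h y * (c * h y + \<kappa>)"
      using hz[of y] hpos[of y] c \<kappa> by (intro mult_mono add_mono mult_left_mono) auto
    finally show "h' y \<le> c * h y + \<kappa>"
      using hpos[of y] unfolding h'_def by (simp add: inner_commute divide_le_eq mult.commute)
  qed (use \<tau> c in auto)
  moreover have "h a = \<epsilon>" unfolding h_def z0 using \<epsilon> by simp
  ultimately have "(h \<tau> + \<kappa> / c) * exp (- c * \<tau>) * exp (c * \<tau>) \<le> (\<epsilon> + \<kappa> / c) * exp (- c * a) * exp (c * \<tau>)"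
    by (intro mult_right_mono) simp_all
  hence "h \<tau> + \<kappa> / c \<le> (\<epsilon> + \<kappa> / c) * exp (c * (\<tau> - a))"
    by (simp add: mult.assoc flip: exp_add) (simp add: algebra_simps)
  thus ?thesis using hz[of \<tau>] by simp
qed

lemma norm_growth_bound:
  assumes \<tau>: "\<tau> \<in> {a..<b}"
  shows "norm (z \<tau>) \<le> \<kappa> / c * (exp (c * (\<tau> - a)) - 1)"
proof (rule field_le_epsilon)
  fix e :: real assume "e > 0"
  define E where "E = exp (c * (\<tau> - a))"
  have E: "E > 0" unfolding E_def by simp
  have "norm (z \<tau>) \<le> (e / E + \<kappa> / c) * E - \<kappa> / c"
    using norm_growth_bound_smoothed[OF \<tau>, of "e / E"] \<open>e > 0\<close> E unfolding E_def by simp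
  also have "\<dots> = \<kappa> / c * (E - 1) + e" using E c by (simp add: field_simps)
  finally show "norm (z \<tau>) \<le> \<kappa> / c * (exp (c * (\<tau> - a)) - 1) + e" unfolding E_def .
qed

end

lemma dwell_time_bound:
  fixes c \<kappa> V \<sigma> :: real
  assumes "\<kappa> \<ge> 0" "c > 0" "V \<ge> 0" "\<sigma> \<ge> 0"
    and dwell: "\<kappa> > 0 \<Longrightarrow> \<sigma> \<le> 1 / c * ln (V * c / \<kappa> + 1)"
  shows "\<kappa> / c * (exp (c * \<sigma>) - 1) \<le> V"
proof (cases "\<kappa> = 0")
  case False
  hence \<kappa>: "\<kappa> > 0" using assms(1) by simp
  have "c * \<sigma> \<le> ln (V * c / \<kappa> + 1)"
    using dwell[OF \<kappa>] \<open>c > 0\<close> by (simp add: field_simps)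
  moreover have "V * c / \<kappa> + 1 > 0"
    using assms \<kappa> by (intro add_nonneg_pos divide_nonneg_pos mult_nonneg_nonneg) auto
  ultimately have "exp (c * \<sigma>) \<le> V * c / \<kappa> + 1"
    by (metis exp_le_cancel_iff exp_ln)
  hence "\<kappa> / c * (exp (c * \<sigma>) - 1) \<le> \<kappa> / c * (V * c / \<kappa>)"
    using \<kappa> \<open>c > 0\<close> by (intro mult_left_mono) auto
  also have "\<dots> = V" using \<kappa> \<open>c > 0\<close> by simp
  finally show ?thesis .
qed (use assms in simp)

lemma sampling_interval_exists:
  fixes t :: "nat \<Rightarrow> real"
  assumes "t 0 \<le> \<tau>" and "filterlim t at_top sequentially"
  obtains s where "t s \<le> \<tau>" "\<tau> < t (Suc s)"
proof -
  obtain n where "\<tau> < t n"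
    using assms(2) unfolding filterlim_at_top_dense eventually_sequentially by (meson gt_ex le_refl)
  define m where "m = (LEAST n. \<tau> < t n)"
  have tm: "\<tau> < t m" unfolding m_def using \<open>\<tau> < t n\<close> by (rule LeastI)
  then obtain s where ms: "m = Suc s" using assms(1) by (cases m) auto
  have "\<not> \<tau> < t s" using not_less_Least[of s "\<lambda>n. \<tau> < t n"] ms m_def by auto
  thus thesis using that tm ms by (simp add: not_less)
qed

lemma piecewise_linear_differential_inequality:
  fixes W W' :: "real \<Rightarrow> real" and t :: "nat \<Rightarrow> real"
  assumes t0: "t 0 = 0" and tmono: "mono t" and tinf: "filterlim t at_top sequentially"
    and cont: "continuous_on {0..} W"
    and der: "\<And>s y. t s < y \<Longrightarrow> y < t (Suc s) \<Longrightarrow> (W has_real_derivative W' y) (at y)"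
    and bound: "\<And>s y. t s < y \<Longrightarrow> y < t (Suc s) \<Longrightarrow> W' y \<le> - c * W y + \<beta>"
    and c: "c > 0" and \<tau>: "\<tau> \<ge> 0"
  shows "W \<tau> \<le> \<beta> / c * (1 - exp (- c * \<tau>)) + W 0 * exp (- c * \<tau>)"
proof -
  define G where "G y = (W y - \<beta> / c) * exp (c * y)" for y
  have tge: "t s \<ge> 0" for s using t0 monoD[OF tmono, of 0 s] by simp
  have piece: "G b \<le> G (t s)" if b: "t s \<le> b" "b \<le> t (Suc s)" for s b
  proof -
    have "continuous_on {t s..b} W"
      using cont by (rule continuous_on_subset) (use tge[of s] in auto)
    from linear_differential_inequality[OF b(1) this, of W' "- c" \<beta>] der bound b c
    show ?thesis by (simp add: G_def)
  qed
  have "G (t s) \<le> G 0" for s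
  proof (induction s)
    case (Suc s)
    thus ?case using piece[of s "t (Suc s)"] monoD[OF tmono, of s "Suc s"] by simp
  qed (simp add: t0)
  moreover obtain s where "t s \<le> \<tau>" "\<tau> < t (Suc s)"
    using sampling_interval_exists[of t \<tau>] t0 \<tau> tinf by auto
  ultimately have "G \<tau> \<le> G 0" using piece[of s \<tau>] by (meson less_imp_le order_trans)
  hence "(W \<tau> - \<beta> / c) * exp (c * \<tau>) * exp (- c * \<tau>) \<le> (W 0 - \<beta> / c) * exp (- c * \<tau>)"
    unfolding G_def by (intro mult_right_mono) auto
  hence "W \<tau> - \<beta> / c \<le> (W 0 - \<beta> / c) * exp (- c * \<tau>)"
    by (simp add: mult.assoc flip: exp_add)
  thus ?thesis by (simp add: right_diff_distrib left_diff_distrib)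
qed

lemma sqrt_lyapunov_derivative_bound:
  fixes V V' n lmn lmx k \<rho> \<delta> :: real
  assumes V': "V' \<le> - k * n^2 + \<rho> * n" and lo: "lmn * n^2 \<le> V" and hi: "V \<le> lmx * n^2"
    and pos: "lmn > 0" "lmx > 0" "k > 0" "\<rho> \<ge> 0" "\<delta> > 0" "n \<ge> 0"
  shows "V' / (2 * sqrt (V + \<delta>^2))
    \<le> - (k / (2 * lmx)) * sqrt (V + \<delta>^2) + (\<rho> / (2 * sqrt lmn) + k / (2 * lmx) * \<delta>)"
proof -
  define W where "W = sqrt (V + \<delta>^2)"
  define c where "c = k / (2 * lmx)"
  define b where "b = \<rho> / (2 * sqrt lmn)"
  have V0: "V \<ge> 0" using lo pos by (meson mult_nonneg_nonneg order_trans zero_le_power2 less_imp_le)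
  have W2: "W^2 = V + \<delta>^2" unfolding W_def using V0 by simp
  have W\<delta>: "W \<ge> \<delta>" unfolding W_def using V0 pos by (simp add: real_le_rsqrt)
  have c: "c > 0" unfolding c_def using pos by simp
  have quad: "- k * n^2 \<le> - (2 * c) * V"
    using hi pos unfolding c_def by (simp add: field_simps)
  have lin: "\<rho> * n \<le> 2 * b * W"
  proof -
    have "sqrt lmn * n = sqrt (lmn * n^2)" using pos by (simp add: real_sqrt_mult)
    also have "\<dots> \<le> W" unfolding W_def using lo zero_le_power2[of \<delta>] by (intro real_sqrt_le_mono) linarith
    finally have "n \<le> W / sqrt lmn" using pos by (simp add: le_divide_eq mult.commute)
    hence "\<rho> * n \<le> \<rho> * (W / sqrt lmn)" using pos(4) by (rule mult_left_mono)
    thus ?thesis unfolding b_def by simp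
  qed
  have "V' / (2 * W) \<le> (- (2 * c) * V + 2 * b * W) / (2 * W)"
    using V' quad lin W\<delta> pos by (intro divide_right_mono) auto
  also have "\<dots> = - c * W + c * (\<delta>^2 / W) + b"
  proof -
    have V: "V = W * W - \<delta> * \<delta>" using W2 by (simp add: power2_eq_square)
    show ?thesis unfolding V using W\<delta> pos by (simp add: field_simps power2_eq_square)
  qed
  also have "c * (\<delta>^2 / W) \<le> c * \<delta>"
    using W\<delta> pos c by (intro mult_left_mono) (auto simp: divide_le_eq power2_eq_square)
  finally show ?thesis unfolding W_def[symmetric] c_def[symmetric] b_def[symmetric] by linarith
qed

section \<open>Quadratic Lyapunov functions\<close>

context
  fixes P :: "real^'m^'m" and e e' :: "real \<Rightarrow> real^'m" and t :: "nat \<Rightarrow> real" and k \<rho> :: real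
  assumes Psym: "transpose P = P" and l: "lambda_min P > 0" and k: "k > 0" and \<rho>: "\<rho> \<ge> 0"
    and t0: "t 0 = 0" and tmono: "mono t" and tinf: "filterlim t at_top sequentially"
    and cont: "continuous_on {0..} e"
    and der: "\<And>s y. t s < y \<Longrightarrow> y < t (Suc s) \<Longrightarrow> (e has_vector_derivative e' y) (at y)"
    and decay: "\<And>y. y \<ge> 0 \<Longrightarrow>
      e y \<bullet> (P *v e' y) + e' y \<bullet> (P *v e y) \<le> - k * (norm (e y))^2 + \<rho> * norm (e y)"
begin

lemma quadratic_lyapunov_smoothed_bound:
  assumes \<tau>: "\<tau> \<ge> 0" and \<delta>: "\<delta> > 0"
  shows "sqrt (lambda_min P) * norm (e \<tau>)
    \<le> \<rho> * lambda_max P / (k * sqrt (lambda_min P)) * (1 - exp (- (k / (2 * lambda_max P)) * \<tau>))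
      + sqrt (lambda_max P) * norm (e 0) * exp (- (k / (2 * lambda_max P)) * \<tau>) + \<delta>"
proof -
  define L where "L = lambda_max P"
  define l where "l = lambda_min P"
  define c where "c = k / (2 * L)"
  define b where "b = \<rho> / (2 * sqrt l)"
  define E where "E = exp (- c * \<tau>)"
  define V where "V y = e y \<bullet> (P *v e y)" for y
  define W where "W y = sqrt (V y + \<delta>^2)" for y
  have Vlo: "l * (norm (e y))^2 \<le> V y" for y
    using lambda_min_le_quadratic_form[OF Psym] unfolding V_def l_def by (simp add: power2_norm_eq_inner)
  have Vhi: "V y \<le> L * (norm (e y))^2" for y
    using quadratic_form_le_lambda_max[OF Psym] unfolding V_def L_def by (simp add: power2_norm_eq_inner)
  have l0: "l > 0" using l l_def by simp
  have L0: "L > 0" using lambda_min_le_lambda_max[OF Psym] l0 unfolding L_def l_def by simp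
  have c: "c > 0" unfolding c_def using k L0 by simp
  have V0: "V y \<ge> 0" for y
    using Vlo[of y] l0 by (meson order_trans mult_nonneg_nonneg zero_le_power2 less_imp_le)
  have "W \<tau> \<le> (b + c * \<delta>) / c * (1 - E) + W 0 * E"
    unfolding E_def
  proof (rule piecewise_linear_differential_inequality[OF t0 tmono tinf _ _ _ c \<tau>,
        where W' = "\<lambda>y. (e y \<bullet> (P *v e' y) + e' y \<bullet> (P *v e y)) / (2 * W y)"])
    have "continuous_on {0..} (\<lambda>y. P *v e y)"
      by (rule bounded_linear.continuous_on[OF matrix_vector_mul_bounded_linear cont])
    thus "continuous_on {0..} W" unfolding W_def V_def by (intro continuous_intros cont)
  next
    fix s y assume y: "t s < y" "y < t (Suc s)"
    have "((\<lambda>y. P *v e y) has_vector_derivative P *v e' y) (at y)"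
      by (rule bounded_linear.has_vector_derivative[OF matrix_vector_mul_bounded_linear der[OF y]])
    hence "(V has_real_derivative e y \<bullet> (P *v e' y) + e' y \<bullet> (P *v e y)) (at y)"
      unfolding V_def by (rule has_real_derivative_inner[OF der[OF y]])
    moreover have "V y + \<delta>^2 > 0" using V0[of y] \<delta> by (simp add: add_nonneg_pos)
    ultimately show "(W has_real_derivative (e y \<bullet> (P *v e' y) + e' y \<bullet> (P *v e y)) / (2 * W y)) (at y)"
      unfolding W_def by (rule has_real_derivative_sqrt_shift)
    have "y \<ge> 0" using y t0 monoD[OF tmono, of 0 s] by simp
    from sqrt_lyapunov_derivative_bound[OF decay[OF this] Vlo Vhi l0 L0 k \<rho> \<delta> norm_ge_zero]
    show "(e y \<bullet> (P *v e' y) + e' y \<bullet> (P *v e y)) / (2 * W y) \<le> - c * W y + (b + c * \<delta>)"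
      unfolding W_def c_def b_def by simp
  qed
  also have "(b + c * \<delta>) / c = b / c + \<delta>" using c by (simp add: field_simps)
  also have "W 0 \<le> sqrt L * norm (e 0) + \<delta>"
  proof -
    have "W 0 \<le> sqrt (V 0) + sqrt (\<delta>^2)"
      unfolding W_def using sqrt_add_le_add_sqrt[of "V 0" "\<delta>^2"] V0[of 0] by simp
    also have "sqrt (V 0) \<le> sqrt (L * (norm (e 0))^2)" using Vhi[of 0] by simp
    finally show ?thesis using \<delta> L0 by (simp add: real_sqrt_mult)
  qed
  finally have "W \<tau> \<le> (b / c + \<delta>) * (1 - E) + (sqrt L * norm (e 0) + \<delta>) * E"
    using E_def by (simp add: mult_left_mono)
  moreover have "sqrt l * norm (e \<tau>) \<le> W \<tau>"
  proof -
    have "sqrt l * norm (e \<tau>) = sqrt (l * (norm (e \<tau>))^2)" using l0 by (simp add: real_sqrt_mult)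
    also have "\<dots> \<le> W \<tau>" unfolding W_def using Vlo[of \<tau>] zero_le_power2[of \<delta>]
      by (intro real_sqrt_le_mono) linarith
    finally show ?thesis .
  qed
  moreover have "(b / c + \<delta>) * (1 - E) + (sqrt L * norm (e 0) + \<delta>) * E
      = \<rho> * L / (k * sqrt l) * (1 - E) + sqrt L * norm (e 0) * E + \<delta>"
  proof -
    have "b / c = \<rho> * L / (k * sqrt l)" using L0 k by (simp add: b_def c_def field_simps)
    thus ?thesis by (simp add: algebra_simps)
  qed
  ultimately show ?thesis
    unfolding L_def[symmetric] l_def[symmetric] c_def[symmetric] E_def[symmetric] by linarith
qed

lemma quadratic_lyapunov_bounds:
  assumes \<tau>: "\<tau> \<ge> 0"
  shows quadratic_lyapunov_bound:
      "norm (e \<tau>) \<le> lambda_max P * \<rho> / (lambda_min P * k) * (1 - exp (- (k / (2 * lambda_max P)) * \<tau>))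
        + sqrt (lambda_max P / lambda_min P) * norm (e 0) * exp (- (k / (2 * lambda_max P)) * \<tau>)"
    and quadratic_lyapunov_uniform_bound:
      "norm (e \<tau>) \<le> lambda_max P * \<rho> / (lambda_min P * k) + sqrt (lambda_max P / lambda_min P) * norm (e 0)"
proof -
  define L where "L = lambda_max P"
  define l where "l = lambda_min P"
  define E where "E = exp (- (k / (2 * L)) * \<tau>)"
  have l0: "l > 0" using l l_def by simp
  have L0: "L > 0" using lambda_min_le_lambda_max[OF Psym] l0 unfolding L_def l_def by simp
  have "sqrt l * norm (e \<tau>) \<le> \<rho> * L / (k * sqrt l) * (1 - E) + sqrt L * norm (e 0) * E"
    using quadratic_lyapunov_smoothed_bound[OF \<tau>] unfolding L_def l_def E_def by (rule field_le_epsilon)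
  hence "norm (e \<tau>) \<le> (\<rho> * L / (k * sqrt l) * (1 - E) + sqrt L * norm (e 0) * E) / sqrt l"
    using l0 by (simp add: le_divide_eq mult.commute)
  also have "\<dots> = \<rho> * L / (k * sqrt l) / sqrt l * (1 - E) + sqrt L / sqrt l * norm (e 0) * E"
    by (simp add: add_divide_distrib)
  also have "\<rho> * L / (k * sqrt l) / sqrt l = L * \<rho> / (l * k)"
  proof -
    have "sqrt l * sqrt l = l" using l0 by simp
    thus ?thesis using l0 k by (simp add: field_simps)
  qed
  also have "sqrt L / sqrt l = sqrt (L / l)" by (simp add: real_sqrt_divide)
  finally have bound: "norm (e \<tau>) \<le> L * \<rho> / (l * k) * (1 - E) + sqrt (L / l) * norm (e 0) * E" .
  thus "norm (e \<tau>) \<le> lambda_max P * \<rho> / (lambda_min P * k) * (1 - exp (- (k / (2 * lambda_max P)) * \<tau>))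
      + sqrt (lambda_max P / lambda_min P) * norm (e 0) * exp (- (k / (2 * lambda_max P)) * \<tau>)"
    by (simp add: L_def l_def E_def)
  have "E > 0" "E \<le> 1" unfolding E_def using k L0 \<tau> by auto
  moreover have "L * \<rho> / (l * k) \<ge> 0" "sqrt (L / l) * norm (e 0) \<ge> 0" using L0 l0 k \<rho> by auto
  ultimately have "L * \<rho> / (l * k) * (1 - E) + sqrt (L / l) * norm (e 0) * E
      \<le> L * \<rho> / (l * k) + sqrt (L / l) * norm (e 0)"
    by (intro add_mono mult_left_le) auto
  with bound show "norm (e \<tau>) \<le> lambda_max P * \<rho> / (lambda_min P * k) + sqrt (lambda_max P / lambda_min P) * norm (e 0)"
    by (simp add: L_def l_def)
qed

end

section \<open>The sampled-state closed loop\<close>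

lemma riccati_quadratic_form:
  fixes A P :: "real^'m^'m" and B :: "real^'n^'m"
  assumes Psym: "transpose P = P"
    and Ric: "transpose A ** P + P ** A - 2 *\<^sub>R (P ** B ** transpose B ** P) + k *\<^sub>R mat 1 = 0"
  shows "2 * (e \<bullet> (P *v (A *v e))) - 2 * (e \<bullet> ((P ** B ** transpose B ** P) *v e)) = - k * (e \<bullet> e)"
proof -
  have "e \<bullet> (transpose A *v (P *v e)) = e \<bullet> (P *v (A *v e))"
    by (metis transpose_matrix_vector dot_lmul_matrix inner_commute symmetric_matrix_inner_commute[OF Psym])
  moreover have "e \<bullet> ((transpose A ** P + P ** A - 2 *\<^sub>R (P ** B ** transpose B ** P) + k *\<^sub>R mat 1) *v e) = 0"
    using Ric by simp
  ultimately show ?thesis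
    by (simp add: matrix_vector_mult_add_rdistrib matrix_vector_mult_diff_rdistrib inner_add_right
        inner_diff_right matrix_vector_mul_assoc scaleR_matrix_vector_assoc[symmetric])
qed

lemma closed_loop_lyapunov_derivative:
  fixes A P :: "real^'m^'m" and B :: "real^'n^'m" and e z xg d :: "real^'m"
  assumes Psym: "transpose P = P"
    and Ric: "transpose A ** P + P ** A - 2 *\<^sub>R (P ** B ** transpose B ** P) + k *\<^sub>R mat 1 = 0"
    and xg: "norm xg \<le> xgbar" and d: "norm d \<le> dbar" and z: "norm z \<le> VT"
    and f: "f = - (A *v (xg - e) + B *v (transpose B *v (P *v (e - z))) + d)"
    \<comment> \<open>for e = xg - x and z = xhat - x, f is the derivative of e under u = B^T P (e - z)\<close>
  shows "e \<bullet> (P *v f) + f \<bullet> (P *v e)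
      \<le> - k * (norm e)^2 + (2 * dbar * smax P + 2 * VT * smax (P ** B ** transpose B ** P)
                            + 2 * smax (P ** A) * xgbar) * norm e"
proof -
  define N where "N = P ** B ** transpose B ** P"
  have N: "N *v v = P *v (B *v (transpose B *v (P *v v)))" for v
    unfolding N_def by (simp add: matrix_vector_mul_assoc matrix_mul_assoc)
  have "e \<bullet> (P *v f) + f \<bullet> (P *v e) = 2 * (e \<bullet> (P *v f))"
    using symmetric_matrix_inner_commute[OF Psym, of f e] by (simp add: inner_commute)
  also have "\<dots> = 2 * (e \<bullet> (P *v (A *v e))) - 2 * (e \<bullet> (N *v e))
      - 2 * (e \<bullet> ((P ** A) *v xg)) + 2 * (e \<bullet> (N *v z)) - 2 * (e \<bullet> (P *v d))"
    unfolding f N by (simp add: algebra_simps matrix_vector_mul_assoc)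
  also have "2 * (e \<bullet> (P *v (A *v e))) - 2 * (e \<bullet> (N *v e)) = - k * (norm e)^2"
    using riccati_quadratic_form[OF Psym Ric, of e] by (simp add: N_def power2_norm_eq_inner)
  finally show ?thesis
    using abs_inner_matrix_vector_le[OF xg, of e "P ** A"] abs_inner_matrix_vector_le[OF z, of e N]
      abs_inner_matrix_vector_le[OF d, of e P]
    unfolding N_def by (auto simp: algebra_simps abs_le_iff)
qed

lemma pos_def_lambda_min_pos:
  assumes "pos_def P" shows "lambda_min P > 0"
proof -
  have "transpose P = P" using assms unfolding pos_def_def by simp
  then obtain v where "norm v = 1" "v \<bullet> (P *v v) = lambda_min P" using lambda_min_attained by blast
  thus ?thesis using assms unfolding pos_def_def by (metis norm_zero zero_neq_one)
qed

lemma reset_error_bound: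
  fixes A :: "real^'m^'m" and B :: "real^'n^'m"
    and xg :: "real^'m" and d x xhat :: "real \<Rightarrow> real^'m" and u :: "real \<Rightarrow> real^'n"
    and t :: "nat \<Rightarrow> real"
  assumes SA: "smax A > 0" and xg: "norm xg \<le> xgbar" and dbd: "\<forall>\<tau>\<ge>0. norm (d \<tau>) \<le> dbar"
    and t0: "t 0 = 0" and tmono: "mono t" and tinf: "filterlim t at_top sequentially"
    and xode: "\<forall>s. \<forall>\<tau>\<in>{t s..<t (Suc s)}.
        (x has_vector_derivative (A *v x \<tau> + B *v u \<tau> + d \<tau>)) (at \<tau> within {t s..<t (Suc s)})"
    and xhode: "\<forall>s. \<forall>\<tau>\<in>{t s..<t (Suc s)}.
        (xhat has_vector_derivative (- (A *v (xg - xhat \<tau>)) + B *v u \<tau>)) (at \<tau> within {t s..<t (Suc s)})"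
    and reset: "\<forall>s. xhat (t s) = x (t s)"
    and VT: "VT \<ge> 0"
    and dwell: "\<forall>s. smax A * xgbar + dbar > 0 \<longrightarrow>
        t (Suc s) - t s \<le> (1 / smax A) * ln (VT * smax A / (smax A * xgbar + dbar) + 1)"
    and \<tau>: "\<tau> \<ge> 0"
  shows "norm (xhat \<tau> - x \<tau>) \<le> VT"
proof -
  define \<kappa> where "\<kappa> = smax A * xgbar + dbar"
  obtain s where s: "t s \<le> \<tau>" "\<tau> < t (Suc s)"
    using sampling_interval_exists[of t \<tau>] t0 \<tau> tinf by auto
  have ts: "t s \<ge> 0" using t0 monoD[OF tmono, of 0 s] by simp
  have der: "((\<lambda>y. xhat y - x y) has_vector_derivative A *v (xhat y - x y) - (A *v xg + d y))
      (at y within {t s..<t (Suc s)})" if "y \<in> {t s..<t (Suc s)}" for y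
    using has_vector_derivative_diff[OF xhode[rule_format, OF that] xode[rule_format, OF that]]
    by (rule has_vector_derivative_eq_rhs) (simp add: algebra_simps)
  have growth: "norm (A *v (xhat y - x y) - (A *v xg + d y)) \<le> smax A * norm (xhat y - x y) + \<kappa>"
    if "y \<in> {t s..<t (Suc s)}" for y
  proof -
    have "norm (d y) \<le> dbar" using dbd that ts by auto
    moreover have "norm (A *v xg) \<le> smax A * xgbar"
      using norm_matrix_vector_le_smax[of A xg] xg SA by (meson mult_left_mono order_trans less_imp_le)
    ultimately show ?thesis
      using norm_triangle_ineq4[of "A *v (xhat y - x y)" "A *v xg + d y"] norm_triangle_ineq[of "A *v xg" "d y"]
        norm_matrix_vector_le_smax[of A "xhat y - x y"] unfolding \<kappa>_def by linarith
  qed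
  have "norm (xhat \<tau> - x \<tau>) \<le> \<kappa> / smax A * (exp (smax A * (\<tau> - t s)) - 1)"
    using norm_growth_bound[OF der growth _ SA] reset s by auto
  also have "\<dots> \<le> VT"
  proof (rule dwell_time_bound)
    show "\<kappa> \<ge> 0"
      using SA xg dbd norm_ge_zero[of xg] norm_ge_zero[of "d 0"] unfolding \<kappa>_def
      by (smt (verit) mult_nonneg_nonneg)
    show "\<tau> - t s \<le> 1 / smax A * ln (VT * smax A / \<kappa> + 1)" if "\<kappa> > 0"
    proof -
      have "t (Suc s) - t s \<le> 1 / smax A * ln (VT * smax A / \<kappa> + 1)"
        using dwell that unfolding \<kappa>_def by blast
      thus ?thesis using s by linarith
    qed
  qed (use SA VT s in auto)
  finally show ?thesis .
qed

lemma tracking_error_bounds: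
  fixes A :: "real^'m^'m" and B :: "real^'n^'m" and P :: "real^'m^'m"
    and xg :: "real^'m" and d x xhat :: "real \<Rightarrow> real^'m" and u :: "real \<Rightarrow> real^'n"
    and t :: "nat \<Rightarrow> real"
  assumes Ppd: "pos_def P"
    and Ric: "transpose A ** P + P ** A - 2 *\<^sub>R (P ** B ** transpose B ** P) + k *\<^sub>R mat 1 = 0"
    and k: "k > 0" and xg: "norm xg \<le> xgbar" and dbd: "\<forall>\<tau>\<ge>0. norm (d \<tau>) \<le> dbar"
    and t0: "t 0 = 0" and tmono: "mono t" and tinf: "filterlim t at_top sequentially"
    and xcont: "continuous_on {0..} x"
    and xode: "\<forall>s. \<forall>\<tau>\<in>{t s..<t (Suc s)}.
        (x has_vector_derivative (A *v x \<tau> + B *v u \<tau> + d \<tau>)) (at \<tau> within {t s..<t (Suc s)})"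
    and uctrl: "\<forall>\<tau>\<ge>0. u \<tau> = transpose B *v (P *v (xg - xhat \<tau>))"
    and estimation: "\<forall>\<tau>\<ge>0. norm (xhat \<tau> - x \<tau>) \<le> VT" and VT: "VT \<ge> 0"
    and \<tau>: "\<tau> \<ge> 0"
  shows "norm (xg - x \<tau>) \<le>
            lambda_max P * (2 * dbar * smax P + 2 * VT * smax (P ** B ** transpose B ** P)
                            + 2 * smax (P ** A) * xgbar) / (lambda_min P * k)
              * (1 - exp (- (k / (2 * lambda_max P)) * \<tau>))
          + sqrt (lambda_max P / lambda_min P) * norm (xg - x 0) * exp (- (k / (2 * lambda_max P)) * \<tau>)"
    and "norm (xg - x \<tau>) \<le>
            lambda_max P * (2 * dbar * smax P + 2 * VT * smax (P ** B ** transpose B ** P)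
                            + 2 * smax (P ** A) * xgbar) / (lambda_min P * k)
          + sqrt (lambda_max P / lambda_min P) * norm (xg - x 0)"
proof -
  have Psym: "transpose P = P" using Ppd unfolding pos_def_def by simp
  have dbar: "dbar \<ge> 0" using dbd norm_ge_zero[of "d 0"] by (meson order_trans order_refl)
  have xgbar: "xgbar \<ge> 0" using xg norm_ge_zero[of xg] by linarith
  have \<rho>: "2 * dbar * smax P + 2 * VT * smax (P ** B ** transpose B ** P) + 2 * smax (P ** A) * xgbar \<ge> 0"
    using dbar xgbar VT smax_nonneg[of P] smax_nonneg[of "P ** B ** transpose B ** P"] smax_nonneg[of "P ** A"]
    by simp
  have cont: "continuous_on {0..} (\<lambda>\<tau>. xg - x \<tau>)" by (intro continuous_intros xcont)
  have der: "((\<lambda>\<tau>. xg - x \<tau>) has_vector_derivative - (A *v x y + B *v u y + d y)) (at y)"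
    if "t s < y" "y < t (Suc s)" for s y
    using has_vector_derivative_diff[OF has_vector_derivative_const
        has_vector_derivative_at_within_Ico[OF xode[rule_format]]] that by auto
  have decay: "(xg - x y) \<bullet> (P *v - (A *v x y + B *v u y + d y)) + - (A *v x y + B *v u y + d y) \<bullet> (P *v (xg - x y))
      \<le> - k * (norm (xg - x y))^2 + (2 * dbar * smax P + 2 * VT * smax (P ** B ** transpose B ** P)
                            + 2 * smax (P ** A) * xgbar) * norm (xg - x y)" if "y \<ge> 0" for y
  proof (rule closed_loop_lyapunov_derivative[OF Psym Ric xg])
    show "norm (d y) \<le> dbar" "norm (xhat y - x y) \<le> VT" using dbd estimation that by auto
    show "- (A *v x y + B *v u y + d y) = - (A *v (xg - (xg - x y))
        + B *v (transpose B *v (P *v (xg - x y - (xhat y - x y)))) + d y)"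
      using uctrl that by simp
  qed
  note bounds = quadratic_lyapunov_bounds[OF Psym pos_def_lambda_min_pos[OF Ppd] k \<rho> t0 tmono tinf cont der decay \<tau>]
  show "norm (xg - x \<tau>) \<le>
            lambda_max P * (2 * dbar * smax P + 2 * VT * smax (P ** B ** transpose B ** P)
                            + 2 * smax (P ** A) * xgbar) / (lambda_min P * k)
              * (1 - exp (- (k / (2 * lambda_max P)) * \<tau>))
          + sqrt (lambda_max P / lambda_min P) * norm (xg - x 0) * exp (- (k / (2 * lambda_max P)) * \<tau>)"
    using bounds(1) by simp
  show "norm (xg - x \<tau>) \<le>
            lambda_max P * (2 * dbar * smax P + 2 * VT * smax (P ** B ** transpose B ** P)
                            + 2 * smax (P ** A) * xgbar) / (lambda_min P * k)
          + sqrt (lambda_max P / lambda_min P) * norm (xg - x 0)"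
    using bounds(2) by simp
qed

theorem theorem3:
  fixes A :: "real^'m^'m" and B :: "real^'n^'m" and P :: "real^'m^'m"
    and k xgbar dbar VT :: real
    and xg :: "real^'m" and d x xhat :: "real \<Rightarrow> real^'m" and u :: "real \<Rightarrow> real^'n"
    and t :: "nat \<Rightarrow> real"
  assumes SA: "smax A > 0"
    and k: "k > 0"
    and Ppd: "pos_def P"
    and Ric: "transpose A ** P + P ** A - 2 *\<^sub>R (P ** B ** transpose B ** P) + k *\<^sub>R mat 1 = 0"
    and xg: "norm xg \<le> xgbar"
    and dcont: "continuous_on {0..} d"
    and dbd: "\<forall>\<tau>\<ge>0. norm (d \<tau>) \<le> dbar"
    and t0: "t 0 = 0" and tmono: "strict_mono t" and tinf: "filterlim t at_top sequentially"
    and xcont: "continuous_on {0..} x"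
    and xode: "\<forall>s. \<forall>\<tau>\<in>{t s..<t (Suc s)}.
        (x has_vector_derivative (A *v x \<tau> + B *v u \<tau> + d \<tau>)) (at \<tau> within {t s..<t (Suc s)})"
    and uctrl: "\<forall>\<tau>\<ge>0. u \<tau> = transpose B *v (P *v (xg - xhat \<tau>))"
    and xhode: "\<forall>s. \<forall>\<tau>\<in>{t s..<t (Suc s)}.
        (xhat has_vector_derivative (- (A *v (xg - xhat \<tau>)) + B *v u \<tau>)) (at \<tau> within {t s..<t (Suc s)})"
    and reset: "\<forall>s. xhat (t s) = x (t s)"
    and VT: "VT > 0"
    and dwell: "\<forall>s. smax A * xgbar + dbar > 0 \<longrightarrow>
        t (Suc s) - t s \<le> (1 / smax A) * ln (VT * smax A / (smax A * xgbar + dbar) + 1)"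
  shows "(\<forall>\<tau>\<ge>0. norm (xg - x \<tau>) \<le>
            lambda_max P * (2 * dbar * smax P + 2 * VT * smax (P ** B ** transpose B ** P)
                            + 2 * smax (P ** A) * xgbar) / (lambda_min P * k)
              * (1 - exp (- (k / (2 * lambda_max P)) * \<tau>))
          + sqrt (lambda_max P / lambda_min P) * norm (xg - x 0) * exp (- (k / (2 * lambda_max P)) * \<tau>))
       \<and> bounded ((\<lambda>\<tau>. xg - x \<tau>) ` {0..})
       \<and> bounded ((\<lambda>\<tau>. xg - xhat \<tau>) ` {0..})
       \<and> bounded (u ` {0..})"
proof -
  have tmono': "mono t" using tmono by (rule strict_mono_mono)
  have estimation: "\<forall>\<tau>\<ge>0. norm (xhat \<tau> - x \<tau>) \<le> VT"
    using reset_error_bound[OF SA xg dbd t0 tmono' tinf xode xhode reset _ dwell] VT by simp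
  note tracking = tracking_error_bounds[OF Ppd Ric k xg dbd t0 tmono' tinf xcont xode uctrl estimation]
  obtain C where C: "\<And>\<tau>. \<tau> \<ge> 0 \<Longrightarrow> norm (xg - x \<tau>) \<le> C"
    using tracking(2) VT by force
  have xhat_bounded: "bounded ((\<lambda>\<tau>. xg - xhat \<tau>) ` {0..})"
  proof -
    have "norm (xg - xhat \<tau>) \<le> C + VT" if "\<tau> \<ge> 0" for \<tau>
      using norm_triangle_ineq4[of "xg - x \<tau>" "xhat \<tau> - x \<tau>"] C[OF that] estimation that by force
    thus ?thesis unfolding bounded_iff by auto
  qed
  have u_image: "u ` {0..} = (\<lambda>v. transpose B *v (P *v v)) ` (\<lambda>\<tau>. xg - xhat \<tau>) ` {0..}"
    using uctrl by (auto simp: image_image intro!: image_cong)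
  have "bounded (u ` {0..})"
    unfolding u_image by (rule bounded_linear_image[OF xhat_bounded bounded_linear_compose[OF
        matrix_vector_mul_bounded_linear matrix_vector_mul_bounded_linear]])
  moreover have "bounded ((\<lambda>\<tau>. xg - x \<tau>) ` {0..})" using C unfolding bounded_iff by auto
  ultimately show ?thesis using tracking(1) VT xhat_bounded by auto
qed

end
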